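(* Let $X=(x_1\ \cdots\ x_{n+1})$ be a real $n\times(n+1)$ matrix all of whose maximal ($n\times n$) minors have the same sign. Let $X'$ be obtained from $X$ by switching two columns $x_i,x_j$ whose indices $i,j$ are both even or both odd. Then every maximal minor of $X'$ has the opposite sign of the corresponding maximal minor of $X$. Here the maximal minor for a column index set $I$ is taken with columns in increasing order of index. *)

theory Defs
  imports "Jordan_Normal_Form.Column_Operations" "Jordan_Normal_Form.DL_Submatrix"
          "Jordan_Normal_Form.Determinant"
begin

text \<open>Maximal minor of a matrix X (with n rows) for the column index set I (of size n):
  the determinant of the submatrix consisting of all rows and the columns in I,
  taken in increasing order of index (submatrix uses pick, which enumerates I increasingly).\<close>
definition maxminor :: "real mat \<Rightarrow> nat set \<Rightarrow> real" where
  "maxminor X I = det (submatrix X UNIV I)"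

end

theory Submission
  imports Defs
begin

text \<open>Write \<open>\<Delta>\<^sub>k\<close> for the maximal minor omitting column \<open>k\<close>, and let \<open>i < j\<close>.
  For \<open>k \<notin> {i, j}\<close> the corresponding minor of the swapped matrix is \<open>\<Delta>\<^sub>k\<close> with two
  columns exchanged, hence \<open>-\<Delta>\<^sub>k\<close>. Omitting column \<open>i\<close> of the swapped matrix leaves
  the columns of \<open>\<Delta>\<^sub>j\<close>, except that \<open>x\<^sub>i\<close> has moved past the \<open>j - i - 1\<close> columns
  strictly between \<open>i\<close> and \<open>j\<close>: a cycle of sign \<open>(-1)^(j - i - 1) = -1\<close> when \<open>i \<equiv> j\<close>
  mod 2; symmetrically for omitting \<open>j\<close>. So every minor of the swapped matrix is the
  negative of some minor of \<open>X\<close>, and all minors of \<open>X\<close> share one sign.\<close>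

definition col_select_mat :: "'a mat \<Rightarrow> nat \<Rightarrow> (nat \<Rightarrow> nat) \<Rightarrow> 'a mat" where
  "col_select_mat X n f = mat n n (\<lambda>(r, c). X $$ (r, f c))"

lemma det_permute_cols:
  assumes B: "B \<in> carrier_mat n n" and p: "p permutes {0..<n}"
  shows "det (mat n n (\<lambda>(r, c). B $$ (r, p c))) = signof p * det B"
proof -
  have "transpose_mat (mat n n (\<lambda>(r, c). B $$ (r, p c)))
      = mat n n (\<lambda>(r, c). transpose_mat B $$ (p r, c))"
    using B permutes_in_image[OF p] by (intro eq_matI) auto
  then have "det (mat n n (\<lambda>(r, c). B $$ (r, p c)))
           = det (mat n n (\<lambda>(r, c). transpose_mat B $$ (p r, c)))"
    by (metis det_transpose mat_carrier)
  also have "\<dots> = signof p * det (transpose_mat B)"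
    by (rule det_permute_rows[OF _ p]) (use B in auto)
  finally show ?thesis using det_transpose[OF B] by simp
qed

lemma det_col_select_mat_reindex:
  assumes p: "p permutes {0..<n}" and f: "\<And>c. c < n \<Longrightarrow> f c = g (p c)"
  shows "det (col_select_mat X n f) = signof p * det (col_select_mat X n g)"
proof -
  have "col_select_mat X n f = mat n n (\<lambda>(r, c). col_select_mat X n g $$ (r, p c))"
    using permutes_in_image[OF p] f by (intro eq_matI) (auto simp: col_select_mat_def)
  then show ?thesis
    by (simp add: det_permute_cols[OF _ p] col_select_mat_def)
qed

lemma col_select_mat_swapcols:
  assumes "\<And>c. c < n \<Longrightarrow> f c < dim_col X" and "i < dim_col X" "j < dim_col X"
    and "n \<le> dim_row X"
  shows "col_select_mat (swapcols i j X) n f = col_select_mat X n (transpose i j \<circ> f)"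
  using assms by (intro eq_matI) (auto simp: col_select_mat_def transpose_def)

definition skip_index :: "nat \<Rightarrow> nat \<Rightarrow> nat" where
  "skip_index k c = (if c < k then c else Suc c)"

lemma pick_lessThan_Diff_singleton:
  "c < n \<Longrightarrow> pick ({..<Suc n} - {k}) c = skip_index k c"
proof (induction c)
  case 0
  then show ?case
    unfolding pick.simps skip_index_def by (intro Least_equality) auto
next
  case (Suc c)
  then have "pick ({..<Suc n} - {k}) c = skip_index k c" by simp
  with Suc.prems show ?case
    unfolding pick.simps skip_index_def by (intro Least_equality) (auto split: if_splits)
qed

lemma maxminor_Diff_singleton:
  assumes X: "X \<in> carrier_mat n (n + 1)" and k: "k < n + 1"
  shows "maxminor X ({..<n + 1} - {k}) = det (col_select_mat X n (skip_index k))"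
proof -
  have "{c. c < dim_col X \<and> c \<in> {..<n + 1} - {k}} = {..<n + 1} - {k}"
    using X by auto
  then have "submatrix X UNIV ({..<n + 1} - {k}) = col_select_mat X n (skip_index k)"
    using X k unfolding submatrix_def col_select_mat_def
    by (intro eq_matI) (auto simp: pick_UNIV pick_lessThan_Diff_singleton)
  then show ?thesis unfolding maxminor_def by simp
qed

lemma subset_card_Suc_eq_Diff_singleton:
  assumes "finite A" "I \<subseteq> A" "card A = Suc (card I)"
  obtains k where "k \<in> A" "I = A - {k}"
proof -
  have "card (A - I) = 1"
    using assms by (simp add: card_Diff_subset finite_subset)
  then obtain k where "A - I = {k}" by (rule card_1_singletonE)
  with assms(2) show thesis by (intro that) auto
qed

definition shift_cycle :: "nat \<Rightarrow> nat \<Rightarrow> nat \<Rightarrow> nat" where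
  "shift_cycle i d c = (if i \<le> c \<and> c < i + d then Suc c else if c = i + d then i else c)"

lemma shift_cycle_0: "shift_cycle i 0 = id"
  by (auto simp: shift_cycle_def)

lemma shift_cycle_Suc:
  "shift_cycle i (Suc d) = shift_cycle i d \<circ> transpose (i + d) (Suc (i + d))"
  by (rule ext) (auto simp: shift_cycle_def transpose_def)

lemma shift_cycle_permutes: "i + d < n \<Longrightarrow> shift_cycle i d permutes {0..<n}"
  by (induction d) (auto simp: shift_cycle_0 shift_cycle_Suc
      intro!: permutes_compose permutes_swap_id permutes_id)

lemma sign_shift_cycle: "sign (shift_cycle i d) = (-1) ^ d"
proof (induction d)
  case 0
  then show ?case by (simp add: shift_cycle_0)
next
  case (Suc d)
  have "permutation (shift_cycle i d)"
    using shift_cycle_permutes[of i d "Suc (i + d)"] permutation_permutes by blast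
  then have "sign (shift_cycle i (Suc d))
           = sign (shift_cycle i d) * sign (transpose (i + d) (Suc (i + d)))"
    unfolding shift_cycle_Suc by (rule sign_compose[OF _ permutation_swap_id])
  with Suc.IH show ?case by (simp add: sign_swap_id)
qed

lemma swapcols_commute: "swapcols i j X = swapcols j i X"
  by (auto simp: mat_swapcols_def)

lemma swapcols_swapcols:
  assumes "i < dim_col X" "j < dim_col X"
  shows "swapcols i j (swapcols i j X) = X"
  using assms by (intro eq_matI) auto

lemma maxminor_swapcols_Diff_singleton:
  assumes X: "X \<in> carrier_mat n (n + 1)" and k: "k < n + 1" and "i < n + 1" "j < n + 1"
  shows "maxminor (swapcols i j X) ({..<n + 1} - {k})
       = det (col_select_mat X n (transpose i j \<circ> skip_index k))"
proof -
  have "maxminor (swapcols i j X) ({..<n + 1} - {k})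
      = det (col_select_mat (swapcols i j X) n (skip_index k))"
    using X k by (intro maxminor_Diff_singleton) simp_all
  also have "col_select_mat (swapcols i j X) n (skip_index k)
           = col_select_mat X n (transpose i j \<circ> skip_index k)"
    using assms by (intro col_select_mat_swapcols) (auto simp: skip_index_def)
  finally show ?thesis .
qed

lemma maxminor_swapcols_Diff_other:
  fixes X :: "real mat"
  assumes X: "X \<in> carrier_mat n (n + 1)" and ij: "i < n + 1" "j < n + 1" "i \<noteq> j"
    and k: "k < n + 1" "k \<noteq> i" "k \<noteq> j"
  shows "maxminor (swapcols i j X) ({..<n + 1} - {k}) = - maxminor X ({..<n + 1} - {k})"
proof -
  define unskip where "unskip v = (if v < k then v else v - 1)" for v
  have p: "transpose (unskip i) (unskip j) permutes {0..<n}"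
    using ij k by (intro permutes_swap_id) (auto simp: unskip_def)
  have "unskip i \<noteq> unskip j"
    using ij k unfolding unskip_def by auto
  then have sign: "signof (transpose (unskip i) (unskip j)) = (-1 :: real)"
    by (simp add: sign_swap_id)
  have reindex: "(transpose i j \<circ> skip_index k) c
      = skip_index k (transpose (unskip i) (unskip j) c)" if "c < n" for c
    using ij k by (auto simp: unskip_def skip_index_def transpose_def)
  have "det (col_select_mat X n (transpose i j \<circ> skip_index k))
      = - det (col_select_mat X n (skip_index k))"
    using det_col_select_mat_reindex[where f = "transpose i j \<circ> skip_index k", OF p reindex, of X]
      sign by simp
  then show ?thesis
    unfolding maxminor_swapcols_Diff_singleton[OF X k(1) ij(1,2)]
      maxminor_Diff_singleton[OF X k(1)] .
qed

lemma maxminor_swapcols_Diff_left: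
  fixes X :: "real mat"
  assumes X: "X \<in> carrier_mat n (n + 1)" and ij: "i < j" "j < n + 1"
  shows "maxminor (swapcols i j X) ({..<n + 1} - {i})
       = (-1) ^ (j - Suc i) * maxminor X ({..<n + 1} - {j})"
proof -
  have j: "j = Suc (i + (j - Suc i))" using ij by simp
  have p: "shift_cycle i (j - Suc i) permutes {0..<n}"
    using ij by (intro shift_cycle_permutes) simp
  have reindex:
    "(transpose i j \<circ> skip_index i) c = skip_index j (shift_cycle i (j - Suc i) c)" if "c < n" for c
    by (subst (1 2 3) j) (auto simp: shift_cycle_def skip_index_def transpose_def)
  have "det (col_select_mat X n (transpose i j \<circ> skip_index i))
      = (-1) ^ (j - Suc i) * det (col_select_mat X n (skip_index j))"
    using det_col_select_mat_reindex[where f = "transpose i j \<circ> skip_index i", OF p reindex]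
    by (simp add: sign_shift_cycle)
  moreover have i: "i < n + 1" using ij by simp
  ultimately show ?thesis
    unfolding maxminor_swapcols_Diff_singleton[OF X i i ij(2)]
      maxminor_Diff_singleton[OF X ij(2)] by simp
qed

lemma maxminor_swapcols_Diff_right:
  fixes X :: "real mat"
  assumes X: "X \<in> carrier_mat n (n + 1)" and ij: "i < j" "j < n + 1"
  shows "maxminor (swapcols i j X) ({..<n + 1} - {j})
       = (-1) ^ (j - Suc i) * maxminor X ({..<n + 1} - {i})"
proof -
  have "maxminor X ({..<n + 1} - {i})
      = (-1) ^ (j - Suc i) * maxminor (swapcols i j X) ({..<n + 1} - {j})"
    using maxminor_swapcols_Diff_left[of "swapcols i j X", OF _ ij] X ij
    by (simp add: swapcols_swapcols)
  then show ?thesis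
    by (simp add: power_mult_distrib[symmetric])
qed

lemma maxminor_swapcols_same_parity:
  fixes X :: "real mat"
  assumes X: "X \<in> carrier_mat n (n + 1)"
    and ij: "i < n + 1" "j < n + 1" "i \<noteq> j" and parity: "even i \<longleftrightarrow> even j"
    and k: "k < n + 1"
  obtains m where "m < n + 1"
    "maxminor (swapcols i j X) ({..<n + 1} - {k}) = - maxminor X ({..<n + 1} - {m})"
proof -
  define a b where "a = min i j" and "b = max i j"
  have ab: "a < b" "b < n + 1" "a < n + 1" "odd (b - Suc a)"
    using ij parity by (auto simp: a_def b_def min_def max_def)
  have swap: "swapcols i j X = swapcols a b X"
    by (auto simp: a_def b_def min_def max_def swapcols_commute)
  consider "k = a" | "k = b" | "k \<noteq> a" "k \<noteq> b" by blast
  then show thesis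
  proof cases
    case 1
    with ab show thesis
      using maxminor_swapcols_Diff_left[OF X ab(1,2)] by (intro that[of b]) (auto simp: swap)
  next
    case 2
    with ab show thesis
      using maxminor_swapcols_Diff_right[OF X ab(1,2)] by (intro that[of a]) (auto simp: swap)
  next
    case 3
    with ab k show thesis
      using maxminor_swapcols_Diff_other[OF X ab(3,2) _ k] by (intro that[of k]) (auto simp: swap)
  qed
qed

theorem lemma3p9:
  fixes X :: "real mat" and n i j :: nat
  assumes X: "X \<in> carrier_mat n (n + 1)"
    and same_sign: "(\<forall>I. I \<subseteq> {..<n + 1} \<and> card I = n \<longrightarrow> maxminor X I > 0)
                  \<or> (\<forall>I. I \<subseteq> {..<n + 1} \<and> card I = n \<longrightarrow> maxminor X I < 0)"
    and ij: "i < n + 1" "j < n + 1" "i \<noteq> j"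
    and parity: "even i \<longleftrightarrow> even j"
  shows "\<forall>I. I \<subseteq> {..<n + 1} \<and> card I = n \<longrightarrow>
           sgn (maxminor (swapcols i j X) I) = - sgn (maxminor X I)"
proof (intro allI impI)
  fix I assume I: "I \<subseteq> {..<n + 1} \<and> card I = n"
  then obtain k where k: "k < n + 1" and I_eq: "I = {..<n + 1} - {k}"
    using subset_card_Suc_eq_Diff_singleton[of "{..<n + 1}" I] by auto
  obtain m where m: "m < n + 1"
    and minor: "maxminor (swapcols i j X) I = - maxminor X ({..<n + 1} - {m})"
    using maxminor_swapcols_same_parity[OF X ij parity k] unfolding I_eq by blast
  have "sgn (maxminor X ({..<n + 1} - {m})) = sgn (maxminor X I)"
    using same_sign I m by (auto simp: card_Diff_singleton)
  with minor show "sgn (maxminor (swapcols i j X) I) = - sgn (maxminor X I)"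
    by (simp add: sgn_minus)
qed

end
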